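(* The following set $\mathcal B_0$ of elements is a basis of the complex vector space $\hat{G}_{\Lambda,\Lambda_F}$: (1) all $\bar\Xi^{\lambda_1}_{\lambda_2}\otimes f^{\dot I}_{\dot J}\otimes\Xi^{\lambda_3}_{\lambda_4}$ with $\lambda_1+\lambda_2>2$ and $\lambda_3+\lambda_4>2$; (2) all $\bar\Xi^{\lambda_1}_{\lambda_2}\otimes l^{\dot I}_{\dot J}$ with $\lambda_1\ne1$ or $\lambda_2\ne1$; (3) all $r^{\dot I}_{\dot J}\otimes\Xi^{\lambda_1}_{\lambda_2}$ with $\lambda_1\ne1$ or $\lambda_2\ne1$; (4) all $\sigma^{\dot I}_{\dot J}$; where $\dot I,\dot J$ range over all sequences and the $\lambda_i$ over $\{1,\dots,\Lambda_F\}$.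
   Context: Fix positive integers $\Lambda,\Lambda_F$. A sequence $\dot I=i_1\cdots i_a$ is a finite, possibly empty, sequence of integers in $\{1,\dots,\Lambda\}$; juxtaposition denotes concatenation and $\delta^{\dot I}_{\dot J}$ is $1$ if $\dot I=\dot J$ and $0$ otherwise (similarly for integers). Let $\mathcal{T}_o$ be the complex vector space with basis the symbols $\bar\phi^{\lambda_1}\otimes s^{\dot K}\otimes\phi^{\lambda_2}$, $1\le\lambda_1,\lambda_2\le\Lambda_F$, $\dot K$ any sequence. For all sequences $\dot I,\dot J$ and all $\lambda_i\in\{1,\dots,\Lambda_F\}$ define linear operators on $\mathcal{T}_o$ (each written as a single symbol): first kind: $\bar\Xi^{\lambda_1}_{\lambda_2}\otimes f^{\dot I}_{\dot J}\otimes\Xi^{\lambda_3}_{\lambda_4}(\bar\phi^{\lambda_5}\otimes s^{\dot K}\otimes\phi^{\lambda_6})=\delta^{\lambda_5}_{\lambda_2}\delta^{\dot K}_{\dot J}\delta^{\lambda_6}_{\lambda_4}\,\bar\phi^{\lambda_1}\otimes s^{\dot I}\otimes\phi^{\lambda_3}$; second kind: $\bar\Xi^{\lambda_1}_{\lambda_2}\otimes l^{\dot I}_{\dot J}(\bar\phi^{\lambda_3}\otimes s^{\dot K}\otimes\phi^{\lambda_4})=\delta^{\lambda_3}_{\lambda_2}\sum_{\dot K_1\dot K_2=\dot K}\delta^{\dot K_1}_{\dot J}\,\bar\phi^{\lambda_1}\otimes s^{\dot I\dot K_2}\otimes\phi^{\lambda_4}$; third kind: $r^{\dot I}_{\dot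 J}\otimes\Xi^{\lambda_1}_{\lambda_2}(\bar\phi^{\lambda_3}\otimes s^{\dot K}\otimes\phi^{\lambda_4})=\delta^{\lambda_4}_{\lambda_2}\sum_{\dot K_1\dot K_2=\dot K}\delta^{\dot K_2}_{\dot J}\,\bar\phi^{\lambda_3}\otimes s^{\dot K_1\dot I}\otimes\phi^{\lambda_1}$; fourth kind: $\sigma^{\dot I}_{\dot J}(\bar\phi^{\lambda_1}\otimes s^{\dot K}\otimes\phi^{\lambda_2})=\sum_{\dot K_1\dot K_2\dot K_3=\dot K}\delta^{\dot K_2}_{\dot J}\,\bar\phi^{\lambda_1}\otimes s^{\dot K_1\dot I\dot K_3}\otimes\phi^{\lambda_2}$; sums run over all ways to write $\dot K$ as a concatenation of possibly empty sequences. The open string algebra $\hat{G}_{\Lambda,\Lambda_F}$ is the complex Lie algebra (commutator bracket) of operators on $\mathcal{T}_o$ spanned by all operators of these four kinds; elements are regarded as these operators. *)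

theory Defs
  imports Complex_Main
begin

text \<open>Basis symbols of T_o: (lambda1, K, lambda2) stands for phibar^lambda1 (x) s^K (x) phi^lambda2.
  A linear operator on T_o is represented by its matrix: op b b' is the coefficient of the
  basis symbol b' in op(b).\<close>

type_synonym sym = "nat \<times> nat list \<times> nat"
type_synonym opr = "sym \<Rightarrow> sym \<Rightarrow> complex"

definition seqs :: "nat \<Rightarrow> nat list set" where
  "seqs L = {xs. set xs \<subseteq> {1..L}}"

definition valid_sym :: "nat \<Rightarrow> nat \<Rightarrow> sym \<Rightarrow> bool" where
  "valid_sym L LF b = (case b of (l1, K, l2) \<Rightarrow> l1 \<in> {1..LF} \<and> K \<in> seqs L \<and> l2 \<in> {1..LF})"

definition opF :: "nat \<Rightarrow> nat \<Rightarrow> nat \<Rightarrow> nat \<Rightarrow> nat list \<Rightarrow> nat list \<Rightarrow> nat \<Rightarrow> nat \<Rightarrow> opr" where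
  "opF L LF l1 l2 I J l3 l4 = (\<lambda>(l5, K, l6) b'.
     if valid_sym L LF (l5, K, l6) \<and> l5 = l2 \<and> K = J \<and> l6 = l4 \<and> b' = (l1, I, l3) then 1 else 0)"

definition opL :: "nat \<Rightarrow> nat \<Rightarrow> nat \<Rightarrow> nat \<Rightarrow> nat list \<Rightarrow> nat list \<Rightarrow> opr" where
  "opL L LF l1 l2 I J = (\<lambda>(l3, K, l4) (m1, K', m2).
     if valid_sym L LF (l3, K, l4) \<and> l3 = l2 \<and> m1 = l1 \<and> m2 = l4
     then of_nat (card {(K1, K2). K1 @ K2 = K \<and> K1 = J \<and> K' = I @ K2}) else 0)"

definition opR :: "nat \<Rightarrow> nat \<Rightarrow> nat list \<Rightarrow> nat list \<Rightarrow> nat \<Rightarrow> nat \<Rightarrow> opr" where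
  "opR L LF I J l1 l2 = (\<lambda>(l3, K, l4) (m1, K', m2).
     if valid_sym L LF (l3, K, l4) \<and> l4 = l2 \<and> m1 = l3 \<and> m2 = l1
     then of_nat (card {(K1, K2). K1 @ K2 = K \<and> K2 = J \<and> K' = K1 @ I}) else 0)"

definition opS :: "nat \<Rightarrow> nat \<Rightarrow> nat list \<Rightarrow> nat list \<Rightarrow> opr" where
  "opS L LF I J = (\<lambda>(l1, K, l2) (m1, K', m2).
     if valid_sym L LF (l1, K, l2) \<and> m1 = l1 \<and> m2 = l2
     then of_nat (card {(K1, K2, K3). K1 @ K2 @ K3 = K \<and> K2 = J \<and> K' = K1 @ I @ K3}) else 0)"

definition lincomb :: "(opr \<Rightarrow> complex) \<Rightarrow> opr set \<Rightarrow> opr" where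
  "lincomb c F = (\<lambda>b b'. \<Sum>f\<in>F. c f * f b b')"

definition opspan :: "opr set \<Rightarrow> opr set" where
  "opspan S = {lincomb c F | c F. finite F \<and> F \<subseteq> S}"

definition lin_indep :: "opr set \<Rightarrow> bool" where
  "lin_indep S = (\<forall>F c. finite F \<and> F \<subseteq> S \<and> lincomb c F = (\<lambda>_ _. 0) \<longrightarrow> (\<forall>f\<in>F. c f = 0))"

definition is_basis_of :: "opr set \<Rightarrow> opr set \<Rightarrow> bool" where
  "is_basis_of B V = (B \<subseteq> V \<and> lin_indep B \<and> opspan B = V)"

definition Ghat :: "nat \<Rightarrow> nat \<Rightarrow> opr set" where
  "Ghat L LF = opspan (
      {opF L LF l1 l2 I J l3 l4 | l1 l2 I J l3 l4.
         l1 \<in> {1..LF} \<and> l2 \<in> {1..LF} \<and> l3 \<in> {1..LF} \<and> l4 \<in> {1..LF} \<and> I \<in> seqs L \<and> J \<in> seqs L}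
    \<union> {opL L LF l1 l2 I J | l1 l2 I J. l1 \<in> {1..LF} \<and> l2 \<in> {1..LF} \<and> I \<in> seqs L \<and> J \<in> seqs L}
    \<union> {opR L LF I J l1 l2 | l1 l2 I J. l1 \<in> {1..LF} \<and> l2 \<in> {1..LF} \<and> I \<in> seqs L \<and> J \<in> seqs L}
    \<union> {opS L LF I J | I J. I \<in> seqs L \<and> J \<in> seqs L})"

definition B0 :: "nat \<Rightarrow> nat \<Rightarrow> opr set" where
  "B0 L LF =
      {opF L LF l1 l2 I J l3 l4 | l1 l2 I J l3 l4.
         l1 \<in> {1..LF} \<and> l2 \<in> {1..LF} \<and> l3 \<in> {1..LF} \<and> l4 \<in> {1..LF} \<and> I \<in> seqs L \<and> J \<in> seqs L
         \<and> l1 + l2 > 2 \<and> l3 + l4 > 2}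
    \<union> {opL L LF l1 l2 I J | l1 l2 I J. l1 \<in> {1..LF} \<and> l2 \<in> {1..LF} \<and> I \<in> seqs L \<and> J \<in> seqs L
         \<and> (l1 \<noteq> 1 \<or> l2 \<noteq> 1)}
    \<union> {opR L LF I J l1 l2 | l1 l2 I J. l1 \<in> {1..LF} \<and> l2 \<in> {1..LF} \<and> I \<in> seqs L \<and> J \<in> seqs L
         \<and> (l1 \<noteq> 1 \<or> l2 \<noteq> 1)}
    \<union> {opS L LF I J | I J. I \<in> seqs L \<and> J \<in> seqs L}"

end

theory Submission
  imports Defs "HOL-Library.Function_Algebras" "HOL-Library.Sublist" "HOL-Library.Product_Lexorder"
begin

text \<open>Sorting the occurrences
  of J in K by the letter preceding them (if any), and the occurrences of J as a prefix of K by
  the letter following them (if any), gives the relations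
    sigma^I_J = sum_l Xibar^l_l (x) l^I_J + sum_a sigma^(aI)_(aJ),
    Xibar^l1_l2 (x) l^I_J = sum_l Xibar^l1_l2 (x) f^I_J (x) Xi^l_l + sum_a Xibar^l1_l2 (x) l^(Ia)_(Ja),
  and their mirror images for r. Solving them for the summand l = 1 shows that B0 spans.
  For independence, every element of B0 has a pivot entry equal to 1, and every other element
  of B0 that is nonzero there has lower rank (sigma below l and r below f, and within one kind
  a shorter J), so the coefficients of a vanishing combination vanish by well-founded induction.\<close>

section \<open>Counting occurrences in words\<close>

lemma card_lists_by_head:
  assumes "finite A" and "finite S" and "\<And>xs. xs \<in> A \<Longrightarrow> set xs \<subseteq> S"
  shows "card A = of_bool ([] \<in> A) + (\<Sum>a\<in>S. card {xs. a # xs \<in> A})"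
proof -
  have finite_tails: "finite {xs. a # xs \<in> A}" for a
    using finite_vimageI[OF assms(1), of "(#) a"] by (simp add: vimage_def)
  have decomp: "A = (A \<inter> {[]}) \<union> (\<Union>a\<in>S. (#) a ` {xs. a # xs \<in> A})"
  proof (intro equalityI subsetI)
    fix xs
    assume "xs \<in> A"
    then show "xs \<in> (A \<inter> {[]}) \<union> (\<Union>a\<in>S. (#) a ` {xs. a # xs \<in> A})"
      using assms(3)[of xs] by (cases xs) auto
  qed auto
  have "card A = card (A \<inter> {[]}) + card (\<Union>a\<in>S. (#) a ` {xs. a # xs \<in> A})"
    using assms(1,2) finite_tails by (subst decomp, intro card_Un_disjoint) auto
  also have "card (\<Union>a\<in>S. (#) a ` {xs. a # xs \<in> A}) = (\<Sum>a\<in>S. card ((#) a ` {xs. a # xs \<in> A}))"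
    using assms(2) finite_tails by (intro card_UN_disjoint) auto
  finally show ?thesis
    by (simp add: card_image)
qed

lemma card_lists_by_last:
  assumes "finite A" and "finite S" and "\<And>xs. xs \<in> A \<Longrightarrow> set xs \<subseteq> S"
  shows "card A = of_bool ([] \<in> A) + (\<Sum>a\<in>S. card {xs. xs @ [a] \<in> A})"
proof -
  have heads: "{xs. a # xs \<in> rev ` A} = rev ` {xs. xs @ [a] \<in> A}" for a
    by (auto simp: image_iff intro!: bexI[of _ "_ @ [a]"]) (metis rev.simps(2) rev_rev_ident)
  have nil: "[] \<in> rev ` A \<longleftrightarrow> [] \<in> A"
    by force
  have "card A = card (rev ` A)"
    by (simp add: card_image)
  also have "\<dots> = of_bool ([] \<in> rev ` A) + (\<Sum>a\<in>S. card {xs. a # xs \<in> rev ` A})"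
    using assms(1,2) by (intro card_lists_by_head) (auto intro: assms(3)[THEN subsetD])
  finally show ?thesis
    by (simp only: heads nil card_image[OF inj_on_rev])
qed

definition left_contexts :: "'a list \<Rightarrow> 'a list \<Rightarrow> 'a list \<Rightarrow> 'a list \<Rightarrow> 'a list set" where
  "left_contexts I J K K' = {K1. \<exists>K3. K = K1 @ J @ K3 \<and> K' = K1 @ I @ K3}"

definition right_contexts :: "'a list \<Rightarrow> 'a list \<Rightarrow> 'a list \<Rightarrow> 'a list \<Rightarrow> 'a list set" where
  "right_contexts I J K K' = {K3. \<exists>K1. K = K1 @ J @ K3 \<and> K' = K1 @ I @ K3}"

definition prefix_rests :: "'a list \<Rightarrow> 'a list \<Rightarrow> 'a list \<Rightarrow> 'a list \<Rightarrow> 'a list set" where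
  "prefix_rests I J K K' = {X. K = J @ X \<and> K' = I @ X}"

definition suffix_rests :: "'a list \<Rightarrow> 'a list \<Rightarrow> 'a list \<Rightarrow> 'a list \<Rightarrow> 'a list set" where
  "suffix_rests I J K K' = {X. K = X @ J \<and> K' = X @ I}"

lemma left_contexts_subset_prefixes: "left_contexts I J K K' \<subseteq> set (prefixes K)"
  by (auto simp: left_contexts_def)

lemma right_contexts_subset_suffixes: "right_contexts I J K K' \<subseteq> set (suffixes K)"
  by (auto simp: right_contexts_def suffix_def)

lemma prefix_rests_subset: "prefix_rests I J K K' \<subseteq> {drop (length J) K}"
  by (auto simp: prefix_rests_def)

lemma suffix_rests_subset: "suffix_rests I J K K' \<subseteq> {take (length K - length J) K}"
  by (auto simp: suffix_rests_def)

lemma card_subset_singleton: "A \<subseteq> {x} \<Longrightarrow> card A = of_bool (A \<noteq> {})"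
  by (auto simp: subset_singleton_iff)

lemma card_prefix_rests: "card (prefix_rests I J K K') = of_bool ([] \<in> left_contexts I J K K')"
  by (subst card_subset_singleton[OF prefix_rests_subset])
    (auto simp: prefix_rests_def left_contexts_def)

lemma card_suffix_rests: "card (suffix_rests I J K K') = of_bool ([] \<in> right_contexts I J K K')"
  by (subst card_subset_singleton[OF suffix_rests_subset])
    (auto simp: suffix_rests_def right_contexts_def)

lemma card_left_contexts_rec:
  assumes "finite S" and "set K \<subseteq> S"
  shows "card (left_contexts I J K K') =
    card (prefix_rests I J K K') + (\<Sum>a\<in>S. card (left_contexts (a # I) (a # J) K K'))"
proof -
  have "card (left_contexts I J K K') =
      of_bool ([] \<in> left_contexts I J K K') + (\<Sum>a\<in>S. card {xs. xs @ [a] \<in> left_contexts I J K K'})"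
    using assms by (intro card_lists_by_last finite_subset[OF left_contexts_subset_prefixes])
      (auto simp: left_contexts_def)
  then show ?thesis
    by (simp add: card_prefix_rests left_contexts_def)
qed

lemma card_right_contexts_rec:
  assumes "finite S" and "set K \<subseteq> S"
  shows "card (right_contexts I J K K') =
    card (suffix_rests I J K K') + (\<Sum>a\<in>S. card (right_contexts (I @ [a]) (J @ [a]) K K'))"
proof -
  have "card (right_contexts I J K K') =
      of_bool ([] \<in> right_contexts I J K K') + (\<Sum>a\<in>S. card {xs. a # xs \<in> right_contexts I J K K'})"
    using assms by (intro card_lists_by_head finite_subset[OF right_contexts_subset_suffixes])
      (auto simp: right_contexts_def)
  then show ?thesis
    by (simp add: card_suffix_rests right_contexts_def)
qed

lemma card_prefix_rests_rec:
  assumes "finite S" and "set K \<subseteq> S"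
  shows "card (prefix_rests I J K K') =
    of_bool (K = J \<and> K' = I) + (\<Sum>a\<in>S. card (prefix_rests (I @ [a]) (J @ [a]) K K'))"
proof -
  have "card (prefix_rests I J K K') =
      of_bool ([] \<in> prefix_rests I J K K') + (\<Sum>a\<in>S. card {xs. a # xs \<in> prefix_rests I J K K'})"
    using assms by (intro card_lists_by_head finite_subset[OF prefix_rests_subset])
      (auto simp: prefix_rests_def)
  then show ?thesis
    by (simp add: prefix_rests_def)
qed

lemma card_suffix_rests_rec:
  assumes "finite S" and "set K \<subseteq> S"
  shows "card (suffix_rests I J K K') =
    of_bool (K = J \<and> K' = I) + (\<Sum>a\<in>S. card (suffix_rests (a # I) (a # J) K K'))"
proof -
  have "card (suffix_rests I J K K') =
      of_bool ([] \<in> suffix_rests I J K K') + (\<Sum>a\<in>S. card {xs. xs @ [a] \<in> suffix_rests I J K K'})"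
    using assms by (intro card_lists_by_last finite_subset[OF suffix_rests_subset])
      (auto simp: suffix_rests_def)
  then show ?thesis
    by (simp add: suffix_rests_def)
qed

lemma left_contexts_self: "left_contexts I J J I = {[]}"
proof -
  have "K1 = [] \<and> K3 = []" if "J = K1 @ J @ K3" for K1 K3 :: "'a list"
    using arg_cong[OF that, of length] by simp
  then show ?thesis
    by (auto simp: left_contexts_def)
qed

lemma card_left_contexts_gt_0D:
  assumes "0 < card (left_contexts I' J' J I)"
  shows "(I' = I \<and> J' = J) \<or> length J' < length J"
proof -
  from assms have "left_contexts I' J' J I \<noteq> {}"
    by auto
  then obtain K1 K3 where "J = K1 @ J' @ K3" and "I = K1 @ I' @ K3"
    unfolding left_contexts_def by blast
  then show ?thesis
    by (cases "K1 = [] \<and> K3 = []") auto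
qed

lemma card_prefix_rests_gt_0D:
  "0 < card (prefix_rests I' J' J I) \<Longrightarrow> (I' = I \<and> J' = J) \<or> length J' < length J"
  by (auto simp: prefix_rests_def card_gt_0_iff)

lemma card_suffix_rests_gt_0D:
  "0 < card (suffix_rests I' J' J I) \<Longrightarrow> (I' = I \<and> J' = J) \<or> length J' < length J"
  by (auto simp: suffix_rests_def card_gt_0_iff)

section \<open>Matrix entries and linear relations\<close>

lemma card_triple_splits_eq_left_contexts:
  "card {(K1, K2, K3). K1 @ K2 @ K3 = K \<and> K2 = J \<and> K' = K1 @ I @ K3} = card (left_contexts I J K K')"
  by (rule bij_betw_same_card[of fst])
    (auto simp: bij_betw_def inj_on_def left_contexts_def image_iff)

lemma card_triple_splits_eq_right_contexts:
  "card {(K1, K2, K3). K1 @ K2 @ K3 = K \<and> K2 = J \<and> K' = K1 @ I @ K3} = card (right_contexts I J K K')"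
  by (rule bij_betw_same_card[of "snd \<circ> snd"])
    (auto simp: bij_betw_def inj_on_def right_contexts_def image_iff)

lemma card_pair_splits_eq_prefix_rests:
  "card {(K1, K2). K1 @ K2 = K \<and> K1 = J \<and> K' = I @ K2} = card (prefix_rests I J K K')"
  by (rule bij_betw_same_card[of snd])
    (auto simp: bij_betw_def inj_on_def prefix_rests_def image_iff)

lemma card_pair_splits_eq_suffix_rests:
  "card {(K1, K2). K1 @ K2 = K \<and> K2 = J \<and> K' = K1 @ I} = card (suffix_rests I J K K')"
  by (rule bij_betw_same_card[of fst])
    (auto simp: bij_betw_def inj_on_def suffix_rests_def image_iff)

lemma opF_apply:
  "opF L LF l1 l2 I J l3 l4 (l5, K, l6) (m1, K', m2) =
    of_bool (valid_sym L LF (l5, K, l6) \<and> l5 = l2 \<and> K = J \<and> l6 = l4 \<and> m1 = l1 \<and> K' = I \<and> m2 = l3)"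
  by (auto simp: opF_def)

lemma opL_apply:
  "opL L LF l1 l2 I J (l3, K, l4) (m1, K', m2) =
    (if valid_sym L LF (l3, K, l4) \<and> l3 = l2 \<and> m1 = l1 \<and> m2 = l4
     then of_nat (card (prefix_rests I J K K')) else 0)"
  by (auto simp: opL_def card_pair_splits_eq_prefix_rests)

lemma opR_apply:
  "opR L LF I J l1 l2 (l3, K, l4) (m1, K', m2) =
    (if valid_sym L LF (l3, K, l4) \<and> l4 = l2 \<and> m1 = l3 \<and> m2 = l1
     then of_nat (card (suffix_rests I J K K')) else 0)"
  by (auto simp: opR_def card_pair_splits_eq_suffix_rests)

lemma opS_apply:
  "opS L LF I J (l1, K, l2) (m1, K', m2) =
    (if valid_sym L LF (l1, K, l2) \<and> m1 = l1 \<and> m2 = l2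
     then of_nat (card (left_contexts I J K K')) else 0)"
  by (simp add: opS_def card_triple_splits_eq_left_contexts)

lemma opS_apply_right_contexts:
  "opS L LF I J (l1, K, l2) (m1, K', m2) =
    (if valid_sym L LF (l1, K, l2) \<and> m1 = l1 \<and> m2 = l2
     then of_nat (card (right_contexts I J K K')) else 0)"
  by (simp add: opS_def card_triple_splits_eq_right_contexts)

lemma valid_sym_iff:
  "valid_sym L LF (l1, K, l2) \<longleftrightarrow> l1 \<in> {1..LF} \<and> set K \<subseteq> {1..L} \<and> l2 \<in> {1..LF}"
  by (simp add: valid_sym_def seqs_def)

lemma sum_fun_apply: "(\<Sum>a\<in>A. f a) x = (\<Sum>a\<in>A. f a x)"
  by (induction A rule: infinite_finite_induct) auto

lemma opr_eqI:
  assumes "\<And>l1 K l2 m1 K' m2. f (l1, K, l2) (m1, K', m2) = g (l1, K, l2) (m1, K', m2)"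
  shows "f = g"
  using assms by (intro ext) auto

lemma opS_eq_sum_opL:
  "opS L LF I J = (\<Sum>l\<in>{1..LF}. opL L LF l l I J) + (\<Sum>a\<in>{1..L}. opS L LF (a # I) (a # J))"
  (is "?lhs = ?rhs")
proof (rule opr_eqI)
  fix l1 K l2 m1 K' m2
  show "?lhs (l1, K, l2) (m1, K', m2) = ?rhs (l1, K, l2) (m1, K', m2)"
  proof (cases "valid_sym L LF (l1, K, l2)")
    case True
    then have "l1 \<in> {1..LF}" and "set K \<subseteq> {1..L}"
      by (simp_all add: valid_sym_iff)
    with True show ?thesis
      by (auto simp: sum_fun_apply opS_apply opL_apply card_left_contexts_rec[of "{1..L}"]
          intro!: sum.neutral)
  qed (simp add: sum_fun_apply opS_apply opL_apply)
qed

lemma opS_eq_sum_opR: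
  "opS L LF I J = (\<Sum>l\<in>{1..LF}. opR L LF I J l l) + (\<Sum>a\<in>{1..L}. opS L LF (I @ [a]) (J @ [a]))"
  (is "?lhs = ?rhs")
proof (rule opr_eqI)
  fix l1 K l2 m1 K' m2
  show "?lhs (l1, K, l2) (m1, K', m2) = ?rhs (l1, K, l2) (m1, K', m2)"
  proof (cases "valid_sym L LF (l1, K, l2)")
    case True
    then have "l2 \<in> {1..LF}" and "set K \<subseteq> {1..L}"
      by (simp_all add: valid_sym_iff)
    with True show ?thesis
      by (auto simp: sum_fun_apply opS_apply_right_contexts opR_apply
          card_right_contexts_rec[of "{1..L}"] intro!: sum.neutral)
  qed (simp add: sum_fun_apply opS_apply_right_contexts opR_apply)
qed

lemma opL_eq_sum_opF:
  "opL L LF n1 n2 I J =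
    (\<Sum>l\<in>{1..LF}. opF L LF n1 n2 I J l l) + (\<Sum>a\<in>{1..L}. opL L LF n1 n2 (I @ [a]) (J @ [a]))"
  (is "?lhs = ?rhs")
proof (rule opr_eqI)
  fix l1 K l2 m1 K' m2
  show "?lhs (l1, K, l2) (m1, K', m2) = ?rhs (l1, K, l2) (m1, K', m2)"
  proof (cases "valid_sym L LF (l1, K, l2)")
    case True
    then have "l2 \<in> {1..LF}" and "set K \<subseteq> {1..L}"
      by (simp_all add: valid_sym_iff)
    with True show ?thesis
      by (auto simp: sum_fun_apply opL_apply opF_apply card_prefix_rests_rec[of "{1..L}"]
          intro!: sum.neutral)
  qed (simp add: sum_fun_apply opL_apply opF_apply)
qed

lemma opR_eq_sum_opF:
  "opR L LF I J n1 n2 =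
    (\<Sum>l\<in>{1..LF}. opF L LF l l I J n1 n2) + (\<Sum>a\<in>{1..L}. opR L LF (a # I) (a # J) n1 n2)"
  (is "?lhs = ?rhs")
proof (rule opr_eqI)
  fix l1 K l2 m1 K' m2
  show "?lhs (l1, K, l2) (m1, K', m2) = ?rhs (l1, K, l2) (m1, K', m2)"
  proof (cases "valid_sym L LF (l1, K, l2)")
    case True
    then have "l1 \<in> {1..LF}" and "set K \<subseteq> {1..L}"
      by (simp_all add: valid_sym_iff)
    with True show ?thesis
      by (auto simp: sum_fun_apply opR_apply opF_apply card_suffix_rests_rec[of "{1..L}"]
          intro!: sum.neutral)
  qed (simp add: sum_fun_apply opR_apply opF_apply)
qed

interpretation opr: module "\<lambda>(k::complex) (f::opr) b b'. k * f b b'"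
  by standard (simp_all add: fun_eq_iff algebra_simps)

lemma lincomb_eq_sum: "lincomb c F = (\<Sum>f\<in>F. (\<lambda>b b'. c f * f b b'))"
  by (simp add: lincomb_def fun_eq_iff sum_fun_apply)

lemma opspan_eq_span: "opspan S = opr.span S"
  by (auto simp: opspan_def opr.span_explicit lincomb_eq_sum)

lemma lin_indep_iff_independent: "lin_indep S \<longleftrightarrow> opr.independent S"
  by (auto simp: lin_indep_def opr.independent_explicit_module lincomb_eq_sum zero_fun_def)

datatype generator =
    GenF nat nat "nat list" "nat list" nat nat
  | GenL nat nat "nat list" "nat list"
  | GenR "nat list" "nat list" nat nat
  | GenS "nat list" "nat list"

fun gen_op :: "nat \<Rightarrow> nat \<Rightarrow> generator \<Rightarrow> opr" where
  "gen_op L LF (GenF l1 l2 I J l3 l4) = opF L LF l1 l2 I J l3 l4"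
| "gen_op L LF (GenL l1 l2 I J) = opL L LF l1 l2 I J"
| "gen_op L LF (GenR I J l1 l2) = opR L LF I J l1 l2"
| "gen_op L LF (GenS I J) = opS L LF I J"

fun gen_in_range :: "nat \<Rightarrow> nat \<Rightarrow> generator \<Rightarrow> bool" where
  "gen_in_range L LF (GenF l1 l2 I J l3 l4) \<longleftrightarrow>
    {l1, l2, l3, l4} \<subseteq> {1..LF} \<and> I \<in> seqs L \<and> J \<in> seqs L"
| "gen_in_range L LF (GenL l1 l2 I J) \<longleftrightarrow> {l1, l2} \<subseteq> {1..LF} \<and> I \<in> seqs L \<and> J \<in> seqs L"
| "gen_in_range L LF (GenR I J l1 l2) \<longleftrightarrow> {l1, l2} \<subseteq> {1..LF} \<and> I \<in> seqs L \<and> J \<in> seqs L"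
| "gen_in_range L LF (GenS I J) \<longleftrightarrow> I \<in> seqs L \<and> J \<in> seqs L"

fun gen_basic :: "generator \<Rightarrow> bool" where
  "gen_basic (GenF l1 l2 _ _ l3 l4) \<longleftrightarrow> 2 < l1 + l2 \<and> 2 < l3 + l4"
| "gen_basic (GenL l1 l2 _ _) \<longleftrightarrow> l1 \<noteq> 1 \<or> l2 \<noteq> 1"
| "gen_basic (GenR _ _ l1 l2) \<longleftrightarrow> l1 \<noteq> 1 \<or> l2 \<noteq> 1"
| "gen_basic (GenS _ _) \<longleftrightarrow> True"

lemma gen_op_image:
  "gen_op L LF ` {g. P g} =
      {opF L LF l1 l2 I J l3 l4 | l1 l2 I J l3 l4. P (GenF l1 l2 I J l3 l4)}
    \<union> {opL L LF l1 l2 I J | l1 l2 I J. P (GenL l1 l2 I J)}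
    \<union> {opR L LF I J l1 l2 | l1 l2 I J. P (GenR I J l1 l2)}
    \<union> {opS L LF I J | I J. P (GenS I J)}" (is "?A = ?B")
proof
  show "?A \<subseteq> ?B"
  proof
    fix f
    assume "f \<in> ?A"
    then obtain g where "P g" and "f = gen_op L LF g"
      by blast
    then show "f \<in> ?B"
      by (cases g) auto
  qed
  show "?B \<subseteq> ?A"
    by (auto intro: rev_image_eqI[of "GenF _ _ _ _ _ _"] rev_image_eqI[of "GenL _ _ _ _"]
        rev_image_eqI[of "GenR _ _ _ _"] rev_image_eqI[of "GenS _ _"])
qed

lemma Ghat_eq_span_generators: "Ghat L LF = opr.span (gen_op L LF ` {g. gen_in_range L LF g})"
  by (simp add: Ghat_def opspan_eq_span gen_op_image)

lemma B0_eq_image: "B0 L LF = gen_op L LF ` {g. gen_in_range L LF g \<and> gen_basic g}"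
  by (simp add: B0_def gen_op_image)

section \<open>Spanning\<close>

lemma span_first_summand:
  fixes n :: nat
  assumes "x = (\<Sum>l\<in>{1..n}. t l) + y" and "1 \<le> n"
    and "x \<in> opr.span S" and "y \<in> opr.span S" and "\<And>l. l \<in> {2..n} \<Longrightarrow> t l \<in> opr.span S"
  shows "t 1 \<in> opr.span S"
proof -
  have "t 1 = x - (\<Sum>l\<in>{2..n}. t l) - y"
    using assms(1,2) by (simp add: sum.atLeast_Suc_atMost numeral_2_eq_2)
  then show ?thesis
    using assms(3-5) by (metis opr.span_diff opr.span_sum)
qed

lemma gen_op_in_span_B0:
  "gen_in_range L LF g \<Longrightarrow> gen_basic g \<Longrightarrow> gen_op L LF g \<in> opr.span (B0 L LF)"
  by (intro opr.span_base) (simp add: B0_eq_image)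

lemma opS_in_span_B0: "I \<in> seqs L \<Longrightarrow> J \<in> seqs L \<Longrightarrow> opS L LF I J \<in> opr.span (B0 L LF)"
  using gen_op_in_span_B0[of L LF "GenS I J"] by simp

lemma opL_in_span_B0:
  assumes "1 \<le> LF" and "l1 \<in> {1..LF}" and "l2 \<in> {1..LF}" and "I \<in> seqs L" and "J \<in> seqs L"
  shows "opL L LF l1 l2 I J \<in> opr.span (B0 L LF)"
proof (cases "l1 = 1 \<and> l2 = 1")
  case True
  have "opL L LF 1 1 I J \<in> opr.span (B0 L LF)"
  proof (rule span_first_summand[OF opS_eq_sum_opL \<open>1 \<le> LF\<close>])
    show "opS L LF I J \<in> opr.span (B0 L LF)"
      using assms by (simp add: opS_in_span_B0)
    show "(\<Sum>a\<in>{1..L}. opS L LF (a # I) (a # J)) \<in> opr.span (B0 L LF)"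
      using assms by (intro opr.span_sum opS_in_span_B0) (auto simp: seqs_def)
    show "opL L LF l l I J \<in> opr.span (B0 L LF)" if "l \<in> {2..LF}" for l
      using assms that gen_op_in_span_B0[of L LF "GenL l l I J"] by simp
  qed
  with True show ?thesis
    by simp
next
  case False
  with assms show ?thesis
    using gen_op_in_span_B0[of L LF "GenL l1 l2 I J"] by simp
qed

lemma opR_in_span_B0:
  assumes "1 \<le> LF" and "l1 \<in> {1..LF}" and "l2 \<in> {1..LF}" and "I \<in> seqs L" and "J \<in> seqs L"
  shows "opR L LF I J l1 l2 \<in> opr.span (B0 L LF)"
proof (cases "l1 = 1 \<and> l2 = 1")
  case True
  have "opR L LF I J 1 1 \<in> opr.span (B0 L LF)"
  proof (rule span_first_summand[OF opS_eq_sum_opR \<open>1 \<le> LF\<close>])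
    show "opS L LF I J \<in> opr.span (B0 L LF)"
      using assms by (simp add: opS_in_span_B0)
    show "(\<Sum>a\<in>{1..L}. opS L LF (I @ [a]) (J @ [a])) \<in> opr.span (B0 L LF)"
      using assms by (intro opr.span_sum opS_in_span_B0) (auto simp: seqs_def)
    show "opR L LF I J l l \<in> opr.span (B0 L LF)" if "l \<in> {2..LF}" for l
      using assms that gen_op_in_span_B0[of L LF "GenR I J l l"] by simp
  qed
  with True show ?thesis
    by simp
next
  case False
  with assms show ?thesis
    using gen_op_in_span_B0[of L LF "GenR I J l1 l2"] by simp
qed

lemma opF_in_span_B0_if_right_nontrivial:
  assumes "1 \<le> LF" and range: "{l1, l2, l3, l4} \<subseteq> {1..LF}" and "I \<in> seqs L" and "J \<in> seqs L"
    and right: "l3 \<noteq> 1 \<or> l4 \<noteq> 1"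
  shows "opF L LF l1 l2 I J l3 l4 \<in> opr.span (B0 L LF)"
proof (cases "l1 = 1 \<and> l2 = 1")
  case True
  have "opF L LF 1 1 I J l3 l4 \<in> opr.span (B0 L LF)"
  proof (rule span_first_summand[OF opR_eq_sum_opF \<open>1 \<le> LF\<close>])
    show "opR L LF I J l3 l4 \<in> opr.span (B0 L LF)"
      using assms gen_op_in_span_B0[of L LF "GenR I J l3 l4"] by simp
    show "(\<Sum>a\<in>{1..L}. opR L LF (a # I) (a # J) l3 l4) \<in> opr.span (B0 L LF)"
      using assms by (intro opr.span_sum)
        (use gen_op_in_span_B0[of L LF "GenR (_ # I) (_ # J) l3 l4"] in \<open>auto simp: seqs_def\<close>)
    show "opF L LF l l I J l3 l4 \<in> opr.span (B0 L LF)" if "l \<in> {2..LF}" for l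
      using assms that gen_op_in_span_B0[of L LF "GenF l l I J l3 l4"] by auto
  qed
  with True show ?thesis
    by simp
next
  case False
  with assms show ?thesis
    using gen_op_in_span_B0[of L LF "GenF l1 l2 I J l3 l4"] by auto
qed

lemma opF_in_span_B0:
  assumes "1 \<le> LF" and "{l1, l2, l3, l4} \<subseteq> {1..LF}" and "I \<in> seqs L" and "J \<in> seqs L"
  shows "opF L LF l1 l2 I J l3 l4 \<in> opr.span (B0 L LF)"
proof (cases "l3 = 1 \<and> l4 = 1")
  case True
  have "opF L LF l1 l2 I J 1 1 \<in> opr.span (B0 L LF)"
  proof (rule span_first_summand[OF opL_eq_sum_opF \<open>1 \<le> LF\<close>])
    show "opL L LF l1 l2 I J \<in> opr.span (B0 L LF)"
      using assms by (simp add: opL_in_span_B0)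
    show "(\<Sum>a\<in>{1..L}. opL L LF l1 l2 (I @ [a]) (J @ [a])) \<in> opr.span (B0 L LF)"
      using assms by (intro opr.span_sum opL_in_span_B0) (auto simp: seqs_def)
    show "opF L LF l1 l2 I J l l \<in> opr.span (B0 L LF)" if "l \<in> {2..LF}" for l
      using assms that by (intro opF_in_span_B0_if_right_nontrivial) auto
  qed
  with True show ?thesis
    by simp
next
  case False
  with assms show ?thesis
    by (intro opF_in_span_B0_if_right_nontrivial) auto
qed

lemma span_B0: "1 \<le> LF \<Longrightarrow> opr.span (B0 L LF) = Ghat L LF"
proof -
  assume "1 \<le> LF"
  then have "gen_op L LF g \<in> opr.span (B0 L LF)" if "gen_in_range L LF g" for g
    using that
    by (cases g) (simp_all add: opF_in_span_B0 opL_in_span_B0 opR_in_span_B0 opS_in_span_B0)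
  then show ?thesis
    unfolding Ghat_eq_span_generators B0_eq_image opr.span_eq by (auto intro: opr.span_base)
qed

section \<open>Independence\<close>

lemma independent_if_unitriangular:
  fixes v :: "'i \<Rightarrow> opr" and rank :: "'i \<Rightarrow> 'r::wellorder" and p q :: "'i \<Rightarrow> sym"
  assumes pivot: "\<And>x. x \<in> X \<Longrightarrow> v x (p x) (q x) \<noteq> 0"
    and below: "\<And>x y. x \<in> X \<Longrightarrow> y \<in> X \<Longrightarrow> v y (p x) (q x) \<noteq> 0 \<Longrightarrow> y = x \<or> rank y < rank x"
  shows "opr.independent (v ` X)"
  unfolding opr.independent_explicit_module
proof (intro allI impI)
  fix F c f
  assume F: "finite F" "F \<subseteq> v ` X" and zero: "(\<Sum>f\<in>F. (\<lambda>b b'. c f * f b b')) = 0"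
    and "f \<in> F"
  have "c (v x) = 0" if "x \<in> X" and "v x \<in> F" for x
    using that
  proof (induction "rank x" arbitrary: x rule: less_induct)
    case less
    have others: "c g * g (p x) (q x) = 0" if g: "g \<in> F - {v x}" for g
    proof -
      obtain y where "y \<in> X" and "g = v y"
        using g F(2) by blast
      with less g below[of x y] show ?thesis
        by auto
    qed
    have "0 = (\<Sum>g\<in>F. c g * g (p x) (q x))"
      using fun_cong[OF fun_cong[OF zero, of "p x"], of "q x"] by (simp add: sum_fun_apply)
    also have "\<dots> = c (v x) * v x (p x) (q x)"
      using F(1) less.prems others by (simp add: sum.remove sum.neutral)
    finally show ?case
      using pivot[OF less.prems(1)] by simp
  qed
  then show "c f = 0"
    using \<open>f \<in> F\<close> F(2) by blast
qed

fun pivot_src :: "generator \<Rightarrow> sym" where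
  "pivot_src (GenF l1 l2 I J l3 l4) = (l2, J, l4)"
| "pivot_src (GenL l1 l2 I J) = (l2, J, 1)"
| "pivot_src (GenR I J l1 l2) = (1, J, l2)"
| "pivot_src (GenS I J) = (1, J, 1)"

fun pivot_tgt :: "generator \<Rightarrow> sym" where
  "pivot_tgt (GenF l1 l2 I J l3 l4) = (l1, I, l3)"
| "pivot_tgt (GenL l1 l2 I J) = (l1, I, 1)"
| "pivot_tgt (GenR I J l1 l2) = (1, I, l1)"
| "pivot_tgt (GenS I J) = (1, I, 1)"

fun gen_rank :: "generator \<Rightarrow> nat \<times> nat" where
  "gen_rank (GenS _ J) = (0, length J)"
| "gen_rank (GenL _ _ _ J) = (1, length J)"
| "gen_rank (GenR _ J _ _) = (1, length J)"
| "gen_rank (GenF _ _ _ _ _ _) = (2, 0)"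

lemma gen_op_pivot:
  "1 \<le> LF \<Longrightarrow> gen_in_range L LF g \<Longrightarrow> gen_op L LF g (pivot_src g) (pivot_tgt g) = 1"
  by (cases g) (auto simp: opF_apply opL_apply opR_apply opS_apply valid_sym_iff seqs_def
      left_contexts_self prefix_rests_def suffix_rests_def)

lemma gen_op_at_pivot_nonzero:
  assumes "gen_basic g" and "gen_basic h" and "gen_op L LF h (pivot_src g) (pivot_tgt g) \<noteq> 0"
  shows "h = g \<or> gen_rank h < gen_rank g"
  using assms
  by (cases g; cases h) (auto simp: opF_apply opL_apply opR_apply opS_apply less_prod_def
      dest: card_left_contexts_gt_0D card_prefix_rests_gt_0D card_suffix_rests_gt_0D split: if_splits)

lemma independent_B0: "1 \<le> LF \<Longrightarrow> opr.independent (B0 L LF)"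
  unfolding B0_eq_image
  by (rule independent_if_unitriangular[where rank = gen_rank and p = pivot_src and q = pivot_tgt])
    (auto simp: gen_op_pivot gen_op_at_pivot_nonzero)

theorem proposition1:
  fixes L LF :: nat
  assumes "L \<ge> 1" and "LF \<ge> 1"
  shows "is_basis_of (B0 L LF) (Ghat L LF)"
proof -
  have span: "opr.span (B0 L LF) = Ghat L LF"
    using assms(2) by (rule span_B0)
  then have "B0 L LF \<subseteq> Ghat L LF"
    using opr.span_superset by blast
  with span show ?thesis
    using independent_B0[OF assms(2)]
    by (simp add: is_basis_of_def lin_indep_iff_independent opspan_eq_span)
qed

end
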